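(* Let $p=(p_k)_{k\ge0}$ and $q=(q_k)_{k\ge0}$ be unimodal probability distributions on $\mathbb{N}_0$, and let $X\sim p$, $Y\sim q$. Then $X\le_{wd}Y$ if and only if $X\le_{rand}Y$, i.e. if and only if $\sum_{i=0}^{m}p_{[i]}\ge\sum_{i=0}^{m}q_{[i]}$ for all $m\in\mathbb{N}_0$.
   Context: For a real random variable $X$, its Lévy concentration function is $Q_X(\varepsilon)=\sup_{x_0\in\mathbb{R}}\Pr\{X\in[x_0,x_0+\varepsilon]\}$, $\varepsilon>0$. For random variables $X,Y$, write $X\le_{wd}Y$ if $Q_X(\varepsilon)\ge Q_Y(\varepsilon)$ for all $\varepsilon>0$. A distribution $p$ on the integers is unimodal if there exists an integer $M$ with $p_k\ge p_{k-1}$ for all $k\le M$ and $p_{k+1}\le p_k$ for all $k\ge M$. For a probability vector $p$, $p_{[0]}\ge p_{[1]}\ge\cdots$ denote its entries in decreasing order. $X\le_{rand}Y$ ($X$ less random than $Y$) means $q$ is majorized by $p$: $\sum_{i=0}^{m}p_{[i]}\ge\sum_{i=0}^{m}q_{[i]}$ for all $m$ (both sum to $1$). *)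

theory Defs
  imports Complex_Main
begin

definition is_distr :: "(nat \<Rightarrow> real) \<Rightarrow> bool" where
  "is_distr p \<longleftrightarrow> (\<forall>k. 0 \<le> p k) \<and> p sums 1"

text \<open>Unimodality (the distribution is extended by zero to negative integers; a mode
  must then lie in the nonnegative integers).\<close>
definition unimodal :: "(nat \<Rightarrow> real) \<Rightarrow> bool" where
  "unimodal p \<longleftrightarrow> (\<exists>M::nat. (\<forall>k. 1 \<le> k \<and> k \<le> M \<longrightarrow> p (k - 1) \<le> p k)
                              \<and> (\<forall>k\<ge>M. p (Suc k) \<le> p k))"

definition conc :: "(nat \<Rightarrow> real) \<Rightarrow> real \<Rightarrow> real" where
  "conc p \<epsilon> = (SUP x0::real. (\<Sum>k\<in>{k. x0 \<le> real k \<and> real k \<le> x0 + \<epsilon>}. p k))"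

definition wd_le :: "(nat \<Rightarrow> real) \<Rightarrow> (nat \<Rightarrow> real) \<Rightarrow> bool" where
  "wd_le p q \<longleftrightarrow> (\<forall>\<epsilon>>0. conc p \<epsilon> \<ge> conc q \<epsilon>)"

text \<open>The i-th largest entry p_[i] (counted with multiplicity; 0 once the support is exhausted).\<close>
definition dec :: "(nat \<Rightarrow> real) \<Rightarrow> nat \<Rightarrow> real" where
  "dec p i = Sup ({0} \<union> {t. t > 0 \<and> i < card {k. t \<le> p k}})"

definition rand_le :: "(nat \<Rightarrow> real) \<Rightarrow> (nat \<Rightarrow> real) \<Rightarrow> bool" where
  "rand_le p q \<longleftrightarrow> (\<forall>m. (\<Sum>i\<le>m. dec p i) \<ge> (\<Sum>i\<le>m. dec q i))"

end

theory Submission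
  imports Defs
begin

text \<open>For a unimodal mass function p, an interval of any given length n can be grown one point
  at a time from a mode, always adding the larger of its two neighbours; every interval built
  this way carries n largest masses of p, so its mass is the top-n sum of the decreasing
  rearrangement. A window [x0, x0 + \<epsilon>] contains at most \<lfloor>\<epsilon>\<rfloor> + 1 integers, and equals such an
  interval when x0 is its left end point, so the concentration function is
  Q(\<epsilon>) = p_[0] + ... + p_[\<lfloor>\<epsilon>\<rfloor>]. Hence both orders compare exactly the same partial sums.\<close>

lemma is_distr_le_1:
  assumes "is_distr p"
  shows "p k \<le> 1"
proof -
  have "summable p" and "suminf p = 1" and "\<forall>k. 0 \<le> p k"
    using assms by (auto simp: is_distr_def sums_iff)
  then have "sum p {k} \<le> suminf p"
    by (intro sum_le_suminf) auto
  then show ?thesis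
    using \<open>suminf p = 1\<close> by simp
qed

lemma is_distr_finite_superlevel:
  assumes "is_distr p" "t > 0"
  shows "finite {k. t \<le> p k}"
proof -
  have "p \<longlonglongrightarrow> 0"
    using assms(1) summable_LIMSEQ_zero sums_summable by (auto simp: is_distr_def)
  then have "eventually (\<lambda>k. p k < t) sequentially"
    using assms(2) by (rule order_tendstoD(2))
  then obtain N where "\<forall>k\<ge>N. p k < t"
    by (auto simp: eventually_sequentially)
  then have "{k. t \<le> p k} \<subseteq> {..<N}"
    by (auto simp: not_less[symmetric])
  then show ?thesis
    using finite_subset by blast
qed

lemma bdd_above_dec_set:
  assumes "is_distr p"
  shows "bdd_above ({0} \<union> {t. t > 0 \<and> i < card {k. t \<le> p k}})"
proof (rule bdd_aboveI[where M = 1])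
  fix t assume t: "t \<in> {0} \<union> {t. t > 0 \<and> i < card {k. t \<le> p k}}"
  show "t \<le> 1"
  proof (cases "t = 0")
    case False
    then obtain k where "t \<le> p k"
      using t card_gt_0_iff by fastforce
    then show ?thesis
      using is_distr_le_1[OF assms, of k] by simp
  qed simp
qed

lemma dec_nonneg:
  assumes "is_distr p"
  shows "0 \<le> dec p i"
  unfolding dec_def by (rule cSup_upper[OF _ bdd_above_dec_set[OF assms]]) simp

lemma le_dec:
  assumes "is_distr p" "0 \<le> t" "finite A" "i < card A" "\<forall>k\<in>A. t \<le> p k"
  shows "t \<le> dec p i"
proof (cases "t = 0")
  case True
  then show ?thesis
    using dec_nonneg[OF assms(1)] by simp
next
  case False
  with assms(2) have "t > 0" by simp
  have "card A \<le> card {k. t \<le> p k}"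
    using assms(5) is_distr_finite_superlevel[OF assms(1) \<open>t > 0\<close>]
    by (intro card_mono) auto
  then show ?thesis
    unfolding dec_def using \<open>t > 0\<close> assms(4)
    by (intro cSup_upper[OF _ bdd_above_dec_set[OF assms(1)]]) auto
qed

lemma dec_le:
  assumes "0 \<le> c" "finite B" "card B \<le> i" "\<forall>k. k \<notin> B \<longrightarrow> p k \<le> c"
  shows "dec p i \<le> c"
  unfolding dec_def
proof (rule cSup_least)
  fix t assume t: "t \<in> {0} \<union> {t. t > 0 \<and> i < card {k. t \<le> p k}}"
  show "t \<le> c"
  proof (rule ccontr)
    assume "\<not> t \<le> c"
    then have "{k. t \<le> p k} \<subseteq> B"
      using assms(4) by force
    then have "card {k. t \<le> p k} \<le> card B"
      using assms(2) by (rule card_mono[rotated])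
    then show False
      using t \<open>\<not> t \<le> c\<close> assms(1,3) by auto
  qed
qed simp

lemma sum_le_sum_dec:
  assumes "is_distr p" "finite A"
  shows "sum p A \<le> (\<Sum>i<card A. dec p i)"
  using assms(2)
proof (induction "card A" arbitrary: A)
  case 0
  then show ?case by simp
next
  case (Suc n)
  then have "A \<noteq> {}" by auto
  obtain m where m: "m \<in> A" "\<forall>k\<in>A. p m \<le> p k"
    using ex_is_arg_min_if_finite[OF \<open>finite A\<close> \<open>A \<noteq> {}\<close>, of p]
    by (auto simp: is_arg_min_linorder)
  have "card (A - {m}) = n"
    using Suc.hyps(2) m(1) by simp
  then have IH: "sum p (A - {m}) \<le> (\<Sum>i<n. dec p i)"
    using Suc.hyps(1)[of "A - {m}"] \<open>finite A\<close> by simp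
  have "sum p A = p m + sum p (A - {m})"
    using \<open>finite A\<close> m(1) by (simp add: sum.remove)
  also note IH
  also have "p m \<le> dec p n"
    using assms(1) \<open>finite A\<close> m Suc(2) by (intro le_dec) (auto simp: is_distr_def)
  finally show ?case
    using Suc(2)[symmetric] by simp
qed

lemma sum_le_sum_dec_card_le:
  assumes "is_distr p" "finite A" "card A \<le> n"
  shows "sum p A \<le> (\<Sum>i<n. dec p i)"
proof -
  have "sum p A \<le> (\<Sum>i<card A. dec p i)"
    using sum_le_sum_dec[OF assms(1,2)] .
  also have "\<dots> \<le> (\<Sum>i<n. dec p i)"
    using assms(3) dec_nonneg[OF assms(1)] by (intro sum_mono2) auto
  finally show ?thesis .
qed

definition top_set :: "(nat \<Rightarrow> real) \<Rightarrow> nat set \<Rightarrow> bool" where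
  "top_set p W \<longleftrightarrow> (\<forall>k\<in>W. \<forall>j. j \<notin> W \<longrightarrow> p j \<le> p k)"

lemma top_set_insert:
  assumes "top_set p W" "\<forall>j. j \<notin> W \<longrightarrow> p j \<le> p i"
  shows "top_set p (insert i W)"
  using assms unfolding top_set_def by auto

lemma sum_top_set:
  assumes "is_distr p" "finite W" "top_set p W"
  shows "sum p W = (\<Sum>i<card W. dec p i)"
  using assms(2,3)
proof (induction "card W" arbitrary: W)
  case 0
  then show ?case by simp
next
  case (Suc n)
  then have "W \<noteq> {}" by auto
  obtain m where m: "m \<in> W" "\<forall>k\<in>W. p m \<le> p k"
    using ex_is_arg_min_if_finite[OF \<open>finite W\<close> \<open>W \<noteq> {}\<close>, of p]
    by (auto simp: is_arg_min_linorder)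
  have card: "card (W - {m}) = n"
    using Suc(2) m(1) by simp
  have "top_set p (W - {m})"
    using Suc.prems(2) m unfolding top_set_def by auto
  then have IH: "sum p (W - {m}) = (\<Sum>i<n. dec p i)"
    using Suc.hyps(1)[of "W - {m}"] card \<open>finite W\<close> by simp
  have "p m \<le> dec p n"
    using assms(1) \<open>finite W\<close> m Suc(2) by (intro le_dec) (auto simp: is_distr_def)
  moreover have "dec p n \<le> p m"
    using assms(1) \<open>finite W\<close> card Suc.prems(2) m(1)
    by (intro dec_le[where B = "W - {m}"]) (auto simp: is_distr_def top_set_def)
  ultimately have "dec p n = p m" by simp
  then show ?case
    using \<open>finite W\<close> m(1) IH Suc(2)[symmetric] by (simp add: sum.remove)
qed

lemma unimodalE:
  assumes "unimodal p"
  obtains M where "\<And>j k. j \<le> k \<Longrightarrow> k \<le> M \<Longrightarrow> p j \<le> p k"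
    and "\<And>j k. M \<le> j \<Longrightarrow> j \<le> k \<Longrightarrow> p k \<le> p j"
proof -
  obtain M where up: "\<forall>k. 1 \<le> k \<and> k \<le> M \<longrightarrow> p (k - 1) \<le> p k"
    and down: "\<forall>k\<ge>M. p (Suc k) \<le> p k"
    using assms unfolding unimodal_def by blast
  have "p j \<le> p k" if "j \<le> k" "k \<le> M" for j k
    using that
  proof (induction k rule: dec_induct)
    case (step k)
    then show ?case
      using up[rule_format, of "Suc k"] by simp
  qed simp
  moreover have "p k \<le> p j" if "M \<le> j" "j \<le> k" for j k
    using that(2)
  proof (induction k rule: dec_induct)
    case (step k)
    then have "p (Suc k) \<le> p k"
      using down that(1) by simp
    with step.IH show ?case by simp
  qed simp
  ultimately show ?thesis
    by (rule that)
qed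

lemma unimodal_top_interval:
  assumes "unimodal p"
  shows "\<exists>a. top_set p {a..<a + n}"
proof -
  obtain M where up: "\<And>j k. j \<le> k \<Longrightarrow> k \<le> M \<Longrightarrow> p j \<le> p k"
    and down: "\<And>j k. M \<le> j \<Longrightarrow> j \<le> k \<Longrightarrow> p k \<le> p j"
    using assms by (rule unimodalE) (rule that)
  have "\<exists>a. a \<le> M \<and> M \<le> a + n \<and> top_set p {a..<a + n}"
  proof (induction n)
    case 0
    show ?case by (auto simp: top_set_def)
  next
    case (Suc n)
    then obtain a where a: "a \<le> M" "M \<le> a + n" "top_set p {a..<a + n}"
      by blast
    have left: "p j \<le> p (a - 1)" if "j < a" for j
      using up that a(1) by simp
    have right: "p j \<le> p (a + n)" if "a + n \<le> j" for j
      using down that a(2) by simp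
    show ?case
    proof (cases "0 < a \<and> p (a + n) \<le> p (a - 1)")
      case True
      have "p j \<le> p (a - 1)" if "j \<notin> {a..<a + n}" for j
        using that left[of j] right[of j] True by (cases "j < a") auto
      then have "top_set p (insert (a - 1) {a..<a + n})"
        using a(3) by (intro top_set_insert) auto
      moreover have "insert (a - 1) {a..<a + n} = {a - 1..<a - 1 + Suc n}"
        using True by auto
      ultimately show ?thesis
        using a True by (intro exI[of _ "a - 1"]) auto
    next
      case False
      have "p j \<le> p (a + n)" if "j \<notin> {a..<a + n}" for j
        using that left[of j] right[of j] False by (cases "j < a") auto
      then have "top_set p (insert (a + n) {a..<a + n})"
        using a(3) by (intro top_set_insert) auto
      moreover have "insert (a + n) {a..<a + n} = {a..<a + Suc n}"
        by auto
      ultimately show ?thesis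
        using a by (intro exI[of _ a]) auto
    qed
  qed
  then show ?thesis by blast
qed

lemma window_subset_interval:
  assumes "0 \<le> \<epsilon>"
  shows "{k::nat. x0 \<le> real k \<and> real k \<le> x0 + \<epsilon>} \<subseteq> {nat \<lceil>x0\<rceil>..<nat \<lceil>x0\<rceil> + Suc (nat \<lfloor>\<epsilon>\<rfloor>)}"
proof
  fix k assume k: "k \<in> {k::nat. x0 \<le> real k \<and> real k \<le> x0 + \<epsilon>}"
  have "\<lceil>x0\<rceil> \<le> int k"
    using k by (simp add: ceiling_le_iff)
  moreover have "real k - \<lceil>x0\<rceil> \<le> \<epsilon>"
    using k le_of_int_ceiling[of x0] by simp linarith
  then have "int k - \<lceil>x0\<rceil> \<le> \<lfloor>\<epsilon>\<rfloor>"
    by (simp add: le_floor_iff)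
  moreover have "0 \<le> \<lfloor>\<epsilon>\<rfloor>"
    using assms by simp
  ultimately have "nat \<lceil>x0\<rceil> \<le> k \<and> k < nat \<lceil>x0\<rceil> + Suc (nat \<lfloor>\<epsilon>\<rfloor>)"
    by linarith
  then show "k \<in> {nat \<lceil>x0\<rceil>..<nat \<lceil>x0\<rceil> + Suc (nat \<lfloor>\<epsilon>\<rfloor>)}"
    by simp
qed

lemma window_at_nat_eq_interval:
  assumes "0 \<le> \<epsilon>"
  shows "{k::nat. real a \<le> real k \<and> real k \<le> real a + \<epsilon>} = {a..<a + Suc (nat \<lfloor>\<epsilon>\<rfloor>)}"
proof -
  obtain l :: nat where l: "\<lfloor>\<epsilon>\<rfloor> = int l"
    using assms zero_le_floor zero_le_imp_eq_int by blast
  have "real k \<le> real a + \<epsilon> \<longleftrightarrow> int k - int a \<le> int l" for k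
    unfolding l[symmetric] by (simp add: le_floor_iff algebra_simps)
  moreover have "a \<le> k \<and> int k - int a \<le> int l \<longleftrightarrow> a \<le> k \<and> k < a + Suc l" for k
    by linarith
  ultimately show ?thesis
    using l by auto
qed

lemma conc_eq_sum_dec:
  assumes "is_distr p" "unimodal p" "0 < \<epsilon>"
  shows "conc p \<epsilon> = (\<Sum>i\<le>nat \<lfloor>\<epsilon>\<rfloor>. dec p i)"
proof -
  define n where "n = Suc (nat \<lfloor>\<epsilon>\<rfloor>)"
  define f where "f x0 = (\<Sum>k\<in>{k. x0 \<le> real k \<and> real k \<le> x0 + \<epsilon>}. p k)" for x0
  have f_le: "f x0 \<le> (\<Sum>i<n. dec p i)" for x0
  proof -
    have sub: "{k. x0 \<le> real k \<and> real k \<le> x0 + \<epsilon>} \<subseteq> {nat \<lceil>x0\<rceil>..<nat \<lceil>x0\<rceil> + n}"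
      using window_subset_interval assms(3) n_def by simp
    have "card {k. x0 \<le> real k \<and> real k \<le> x0 + \<epsilon>} \<le> n"
      using card_mono[OF _ sub] by simp
    then show ?thesis
      unfolding f_def using finite_subset[OF sub]
      by (intro sum_le_sum_dec_card_le[OF assms(1)]) auto
  qed
  obtain a where "top_set p {a..<a + n}"
    using unimodal_top_interval[OF assms(2)] by blast
  then have "sum p {a..<a + n} = (\<Sum>i<n. dec p i)"
    using sum_top_set[OF assms(1)] by fastforce
  then have f_a: "f (real a) = (\<Sum>i<n. dec p i)"
    using window_at_nat_eq_interval[of \<epsilon> a] assms(3) unfolding f_def n_def by simp
  have "conc p \<epsilon> = (SUP x0. f x0)"
    unfolding conc_def f_def ..
  also have "\<dots> = (\<Sum>i<n. dec p i)"
  proof (rule antisym)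
    show "(SUP x0. f x0) \<le> (\<Sum>i<n. dec p i)"
      using f_le by (rule cSUP_least[OF UNIV_not_empty])
    have "bdd_above (range f)"
      using f_le by (intro bdd_aboveI2)
    then show "(\<Sum>i<n. dec p i) \<le> (SUP x0. f x0)"
      using f_a cSUP_upper[of "real a" UNIV f] by simp
  qed
  finally show ?thesis
    unfolding n_def lessThan_Suc_atMost .
qed

theorem proposition5p1:
  fixes p q :: "nat \<Rightarrow> real"
  assumes "is_distr p" "is_distr q" "unimodal p" "unimodal q"
  shows "wd_le p q \<longleftrightarrow> rand_le p q"
proof
  assume wd: "wd_le p q"
  show "rand_le p q"
    unfolding rand_le_def
  proof
    fix m
    define \<epsilon> where "\<epsilon> = real m + 1/2"
    have "0 < \<epsilon>" and "nat \<lfloor>\<epsilon>\<rfloor> = m"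
      unfolding \<epsilon>_def by linarith+
    moreover have "conc q \<epsilon> \<le> conc p \<epsilon>"
      using wd \<open>0 < \<epsilon>\<close> unfolding wd_le_def by blast
    ultimately show "(\<Sum>i\<le>m. dec q i) \<le> (\<Sum>i\<le>m. dec p i)"
      using conc_eq_sum_dec[OF assms(1,3)] conc_eq_sum_dec[OF assms(2,4)] by simp
  qed
next
  assume "rand_le p q"
  then show "wd_le p q"
    using conc_eq_sum_dec[OF assms(1,3)] conc_eq_sum_dec[OF assms(2,4)]
    unfolding wd_le_def rand_le_def by simp
qed

end
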